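(* Let $\rho$ be a probability distribution on $\mathbb N_0$ with finite second moment and let $\mathcal T\sim\mathrm{UGW}(\rho)$. Then for every non-decreasing family of positive constants $(C_{k,T})$ and every finite measure $\varsigma$ on $\mathcal J$, $\mathcal T$ is a.s. finitely dissociable.
   Context: $\mathrm{UGW}(\rho)$ (unimodular Galton–Watson tree) is the random rooted tree in which the root has a $\rho$-distributed number of children and, for each $k\ge0$, conditionally on the first $k$ generations, the vertices of generation $k\ge1$ have i.i.d. numbers of children with law $\hat\rho$, where $\hat\rho_k=(k+1)\rho_{k+1}/\sum_n n\rho_n$, $k\in\mathbb N_0$. Finite dissociability. Fix a countable set $\mathcal J$, a finite measure $\varsigma$ on $\mathcal J$ with $\varsigma(\mathcal J)>0$, and constants $C_{k,T}\in(0,\infty)$, $k\in\mathbb N$, $T\in\mathbb R_+$, non-decreasing in each index. For a vertex $v$ of a graph $G$ let $\mathrm{cl}_v$ denote $v$ together with its neighbours. A deterministic locally finite graph $G$ is finitely dissociable if for every $T\in(0,\infty)$ there is $\Delta\in(0,T]$ such that the following holds: if $(N_v)_{v\in V_G}$ are i.i.d. Poisson random measures on $\mathbb R_+^2\times\mathcal J$ with intensity $\mathrm{Leb}^2\otimes\varsigma$ and a vertex $v$ is called active when $N_v((0,\Delta]\times(0,C_{|\mathrm{cl}_v|,T}]\times\mathcal J)>0$, then a.s. every connected component of the subgraph of $G$ induced by the active vertices is finite. A random graph is a.s. finitely dissociable if its realization is finitely dissociable almost surely. *)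

theory Defs
  imports "HOL-Probability.Probability"
begin

text \<open>A graph is given by a vertex set V and a symmetric adjacency relation E
  (only adjacencies between vertices of V are relevant).\<close>

definition nbhd :: "'v set \<Rightarrow> ('v \<Rightarrow> 'v \<Rightarrow> bool) \<Rightarrow> 'v \<Rightarrow> 'v set" where
  "nbhd V E v = {u \<in> V. E v u}"

definition cl :: "'v set \<Rightarrow> ('v \<Rightarrow> 'v \<Rightarrow> bool) \<Rightarrow> 'v \<Rightarrow> 'v set" where
  "cl V E v = insert v (nbhd V E v)"

definition locally_finite :: "'v set \<Rightarrow> ('v \<Rightarrow> 'v \<Rightarrow> bool) \<Rightarrow> bool" where
  "locally_finite V E \<longleftrightarrow> (\<forall>v\<in>V. finite (nbhd V E v))"

definition induced_edges :: "'v set \<Rightarrow> ('v \<Rightarrow> 'v \<Rightarrow> bool) \<Rightarrow> 'v set \<Rightarrow> ('v \<times> 'v) set" where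
  "induced_edges V E W = {(a, b). a \<in> V \<and> b \<in> V \<and> a \<in> W \<and> b \<in> W \<and> E a b}"

definition all_components_finite :: "'v set \<Rightarrow> ('v \<Rightarrow> 'v \<Rightarrow> bool) \<Rightarrow> 'v set \<Rightarrow> bool" where
  "all_components_finite V E W \<longleftrightarrow>
     (\<forall>w \<in> V \<inter> W. finite {u. (w, u) \<in> (induced_edges V E W)\<^sup>*})"

definition poisson_random_measure ::
    "'w measure \<Rightarrow> 'a measure \<Rightarrow> ('w \<Rightarrow> 'a set \<Rightarrow> ennreal) \<Rightarrow> bool" where
  "poisson_random_measure M \<mu> N \<longleftrightarrow>
     prob_space M \<and>
     (\<forall>\<omega>\<in>space M. measure_space (space \<mu>) (sets \<mu>) (N \<omega>)) \<and>
     (\<forall>A\<in>sets \<mu>. (\<lambda>\<omega>. N \<omega> A) \<in> borel_measurable M) \<and>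
     (\<forall>A\<in>sets \<mu>. emeasure \<mu> A < \<infinity> \<longrightarrow>
        (\<forall>n::nat. measure M {\<omega>\<in>space M. N \<omega> A = of_nat n}
           = (enn2real (emeasure \<mu> A)) ^ n / fact n * exp (- enn2real (emeasure \<mu> A)))) \<and>
     (\<forall>(I :: nat set) A. finite I \<longrightarrow> disjoint_family_on A I \<longrightarrow>
        (\<forall>i\<in>I. A i \<in> sets \<mu> \<and> emeasure \<mu> (A i) < \<infinity>) \<longrightarrow>
        prob_space.indep_vars M (\<lambda>_. borel) (\<lambda>i \<omega>. N \<omega> (A i)) I)"

text \<open>A family (N_v)_{v in V} of i.i.d. Poisson random measures with intensity mu:
  each is a PRM with intensity mu (this fixes the common law) and the random measures
  (viewed as families of counts indexed by the measurable sets, with the product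
  sigma-algebra) are mutually independent.\<close>
definition iid_PRMs ::
    "'w measure \<Rightarrow> 'a measure \<Rightarrow> 'v set \<Rightarrow> ('v \<Rightarrow> 'w \<Rightarrow> 'a set \<Rightarrow> ennreal) \<Rightarrow> bool" where
  "iid_PRMs M \<mu> V N \<longleftrightarrow>
     prob_space M \<and>
     (\<forall>v\<in>V. poisson_random_measure M \<mu> (N v)) \<and>
     prob_space.indep_vars M (\<lambda>_. Pi\<^sub>M (sets \<mu>) (\<lambda>_. (borel :: ennreal measure)))
        (\<lambda>v \<omega>. restrict (N v \<omega>) (sets \<mu>)) V"

definition intensity :: "'j measure \<Rightarrow> ((real \<times> real) \<times> 'j) measure" where
  "intensity \<sigma> =
     restrict_space (lborel \<Otimes>\<^sub>M lborel) ({0::real..} \<times> {0::real..}) \<Otimes>\<^sub>M \<sigma>"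

definition admissible_params ::
    "'j set \<Rightarrow> 'j measure \<Rightarrow> (nat \<Rightarrow> real \<Rightarrow> real) \<Rightarrow> bool" where
  "admissible_params J \<sigma> C \<longleftrightarrow>
     countable J \<and> space \<sigma> = J \<and> sets \<sigma> = Pow J \<and> finite_measure \<sigma> \<and>
     emeasure \<sigma> J > 0 \<and>
     (\<forall>k T. 1 \<le> k \<longrightarrow> 0 \<le> T \<longrightarrow> 0 < C k T) \<and>
     (\<forall>k k' T. 1 \<le> k \<longrightarrow> k \<le> k' \<longrightarrow> 0 \<le> T \<longrightarrow> C k T \<le> C k' T) \<and>
     (\<forall>k T T'. 1 \<le> k \<longrightarrow> 0 \<le> T \<longrightarrow> T \<le> T' \<longrightarrow> C k T \<le> C k T')"

definition active_set ::
    "'v set \<Rightarrow> ('v \<Rightarrow> 'v \<Rightarrow> bool) \<Rightarrow> 'j set \<Rightarrow> (nat \<Rightarrow> real \<Rightarrow> real) \<Rightarrow> real \<Rightarrow> real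
      \<Rightarrow> ('v \<Rightarrow> ((real \<times> real) \<times> 'j) set \<Rightarrow> ennreal) \<Rightarrow> 'v set" where
  "active_set V E J C T \<Delta> Nw =
     {v \<in> V. Nw v (({0<..\<Delta>} \<times> {0<..C (card (cl V E v)) T}) \<times> J) > 0}"

text \<open>Finite dissociability of a deterministic locally finite graph (V, E). The i.i.d.
  Poisson random measures live on an arbitrary probability space M of type 'w.\<close>
definition finitely_dissociable ::
    "'w itself \<Rightarrow> 'j set \<Rightarrow> 'j measure \<Rightarrow> (nat \<Rightarrow> real \<Rightarrow> real)
      \<Rightarrow> 'v set \<Rightarrow> ('v \<Rightarrow> 'v \<Rightarrow> bool) \<Rightarrow> bool" where
  "finitely_dissociable (_ :: 'w itself) J \<sigma> C V E \<longleftrightarrow>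
     locally_finite V E \<and>
     (\<forall>T>0. \<exists>\<Delta>. 0 < \<Delta> \<and> \<Delta> \<le> T \<and>
        (\<forall>(M :: 'w measure) N. iid_PRMs M (intensity \<sigma>) V N \<longrightarrow>
           (AE \<omega> in M. all_components_finite V E
              (active_set V E J C T \<Delta> (\<lambda>v. N v \<omega>)))))"

text \<open>Convention: if the mean is 0 (rho = delta_0, so the tree is a single root and hat rho is
  never used) hat rho is taken to be delta_0.\<close>
definition pmf_mean :: "nat pmf \<Rightarrow> real" where
  "pmf_mean \<rho> = (\<Sum>n. real n * pmf \<rho> n)"

definition hat_rho :: "nat pmf \<Rightarrow> nat \<Rightarrow> real" where
  "hat_rho \<rho> k =
     (if pmf_mean \<rho> = 0 then (if k = 0 then 1 else 0)
      else real (k + 1) * pmf \<rho> (k + 1) / pmf_mean \<rho>)"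

text \<open>Ulam--Harris encoding: given offspring numbers K v for every label v :: nat list,
  the tree has root [] and the children of a vertex v are v @ [i], i < K v.\<close>
inductive_set gw_vertices :: "(nat list \<Rightarrow> nat) \<Rightarrow> nat list set" for K where
  root: "[] \<in> gw_vertices K"
| child: "v \<in> gw_vertices K \<Longrightarrow> i < K v \<Longrightarrow> v @ [i] \<in> gw_vertices K"

definition tree_adj :: "nat list \<Rightarrow> nat list \<Rightarrow> bool" where
  "tree_adj u w \<longleftrightarrow> (\<exists>i. w = u @ [i]) \<or> (\<exists>i. u = w @ [i])"

text \<open>K is a family of offspring numbers realising T ~ UGW(rho) on the probability
  space P: the K v are independent, K [] has law rho, all other K v have law hat rho.
  (This is the standard construction of the law described in the paper.)\<close>
definition UGW_offspring :: "'p measure \<Rightarrow> nat pmf \<Rightarrow> (nat list \<Rightarrow> 'p \<Rightarrow> nat) \<Rightarrow> bool" where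
  "UGW_offspring P \<rho> K \<longleftrightarrow>
     prob_space P \<and>
     (\<forall>v. K v \<in> measurable P (count_space UNIV)) \<and>
     prob_space.indep_vars P (\<lambda>_. count_space UNIV) K UNIV \<and>
     (\<forall>k. measure P {\<omega>\<in>space P. K [] \<omega> = k} = pmf \<rho> k) \<and>
     (\<forall>v k. v \<noteq> [] \<longrightarrow> measure P {\<omega>\<in>space P. K v \<omega> = k} = hat_rho \<rho> k)"

end

theory Submission
  imports Defs
begin

text \<open>Given the tree, a vertex with k children is active independently of the others with
  probability at most q k = 1 - exp (- \<Delta> C(k+2,T) \<sigma>(J)). An infinite active component of a
  locally finite rooted tree would contain arbitrarily long descending active paths from one of
  its vertices, and the expected number of such paths of length n from v is at most the
  path weight \<Sum> over paths of \<Prod> q. Averaged over UGW(\<rho>), the path weights of length n+1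
  are bounded by E[K] m^n with m = \<Sum>k q(k) k hat_rho(k), and m < 1 for small \<Delta> because
  hat_rho has finite mean when \<rho> has finite second moment. So for almost every tree the path
  weights are summable, simultaneously for a sequence of rates \<Delta> chosen for T = 1, 2, ...,
  and the quenched first-moment bound gives finite active components.\<close>

section \<open>Ulam--Harris trees\<close>

lemma gw_vertices_snocD:
  assumes "v @ [i] \<in> gw_vertices \<kappa>"
  shows "v \<in> gw_vertices \<kappa>" and "i < \<kappa> v"
  using assms by (cases rule: gw_vertices.cases; simp)+

lemma nbhd_gw_vertices_subset:
  assumes "u \<in> gw_vertices \<kappa>"
  shows "nbhd (gw_vertices \<kappa>) tree_adj u \<subseteq> insert (butlast u) ((\<lambda>i. u @ [i]) ` {..<\<kappa> u})"
  using gw_vertices_snocD(2) by (fastforce simp: nbhd_def tree_adj_def)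

lemma finite_nbhd_gw_vertices: "u \<in> gw_vertices \<kappa> \<Longrightarrow> finite (nbhd (gw_vertices \<kappa>) tree_adj u)"
  by (rule finite_subset[OF nbhd_gw_vertices_subset]) auto

lemma locally_finite_gw_vertices: "locally_finite (gw_vertices \<kappa>) tree_adj"
  using finite_nbhd_gw_vertices by (auto simp: locally_finite_def)

lemma card_cl_gw_vertices_le:
  assumes "u \<in> gw_vertices \<kappa>"
  shows "card (cl (gw_vertices \<kappa>) tree_adj u) \<le> \<kappa> u + 2"
proof -
  have "card (cl (gw_vertices \<kappa>) tree_adj u)
      \<le> card (insert u (insert (butlast u) ((\<lambda>i. u @ [i]) ` {..<\<kappa> u})))"
    unfolding cl_def using nbhd_gw_vertices_subset[OF assms] by (intro card_mono) auto
  also have "\<dots> \<le> Suc (Suc (card ((\<lambda>i. u @ [i]) ` {..<\<kappa> u})))"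
    by (simp add: card_insert_if)
  also have "card ((\<lambda>i. u @ [i]) ` {..<\<kappa> u}) \<le> \<kappa> u"
    using card_image_le[of "{..<\<kappa> u}" "\<lambda>i. u @ [i]"] by simp
  finally show ?thesis by simp
qed

lemma card_cl_gw_vertices_pos:
  assumes "u \<in> gw_vertices \<kappa>"
  shows "1 \<le> card (cl (gw_vertices \<kappa>) tree_adj u)"
  using finite_nbhd_gw_vertices[OF assms] by (simp add: cl_def Suc_le_eq card_gt_0_iff)

lemma finite_gw_vertices_length_le: "finite {u \<in> gw_vertices \<kappa>. length u \<le> L}"
proof (induction L)
  case 0
  have "{u \<in> gw_vertices \<kappa>. length u \<le> 0} \<subseteq> {[]}" by auto
  then show ?case by (rule finite_subset) simp
next
  case (Suc L)
  let ?S = "{u \<in> gw_vertices \<kappa>. length u \<le> L}"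
  have "{u \<in> gw_vertices \<kappa>. length u \<le> Suc L} \<subseteq> ?S \<union> (\<Union>v\<in>?S. (\<lambda>i. v @ [i]) ` {..<\<kappa> v})"
  proof
    fix u assume u: "u \<in> {u \<in> gw_vertices \<kappa>. length u \<le> Suc L}"
    show "u \<in> ?S \<union> (\<Union>v\<in>?S. (\<lambda>i. v @ [i]) ` {..<\<kappa> v})"
    proof (cases "length u \<le> L")
      case False
      then obtain v i where "u = v @ [i]" by (cases u rule: rev_cases) auto
      with u False gw_vertices_snocD[of v i \<kappa>] show ?thesis by auto
    qed (use u in auto)
  qed
  then show ?case by (rule finite_subset) (use Suc in auto)
qed

text \<open>path_in W v xs: the vertices v @ take k xs with 1 \<le> k \<le> length xs all lie in W
  (v itself need not).\<close>
definition path_in :: "'a list set \<Rightarrow> 'a list \<Rightarrow> 'a list \<Rightarrow> bool" where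
  "path_in W v xs \<longleftrightarrow> (\<forall>k<length xs. v @ take (Suc k) xs \<in> W)"

definition descent_bounded :: "'a list set \<Rightarrow> bool" where
  "descent_bounded W \<longleftrightarrow> (\<forall>v. \<exists>n. \<forall>xs. length xs = n \<longrightarrow> \<not> path_in W v xs)"

lemma path_in_Nil [simp]: "path_in W v []"
  by (simp add: path_in_def)

lemma path_in_snoc: "path_in W v (xs @ [x]) \<longleftrightarrow> path_in W v xs \<and> v @ xs @ [x] \<in> W"
  by (auto simp: path_in_def less_Suc_eq)

lemma path_in_take: "path_in W v xs \<Longrightarrow> path_in W v (take n xs)"
  by (simp add: path_in_def)

lemma path_in_last: "path_in W v xs \<Longrightarrow> xs \<noteq> [] \<Longrightarrow> v @ xs \<in> W"
  by (metis append_butlast_last_id path_in_snoc)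

lemma rtrancl_induced_tree_adj_cases:
  assumes "w \<in> W" and "(w, u) \<in> (induced_edges V tree_adj W)\<^sup>*"
  shows "\<exists>j xs. j \<le> length w \<and> u = take j w @ xs \<and> take j w \<in> W \<and> path_in W (take j w) xs"
  using assms(2)
proof (induction rule: rtrancl_induct)
  case base
  show ?case using assms(1) by (intro exI[of _ "length w"] exI[of _ "[]"]) simp
next
  case (step u u')
  from step.IH obtain j xs where j: "j \<le> length w" and u: "u = take j w @ xs"
    and a: "take j w \<in> W" and p: "path_in W (take j w) xs" by blast
  from step.hyps(2) have "u' \<in> W" and "tree_adj u u'"
    by (auto simp: induced_edges_def)
  then consider i where "u' = u @ [i]" | i where "u = u' @ [i]" by (auto simp: tree_adj_def)
  then show ?case
  proof cases
    case (1 i)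
    then show ?thesis using j u a p \<open>u' \<in> W\<close>
      by (intro exI[of _ j] exI[of _ "xs @ [i]"]) (simp add: path_in_snoc)
  next
    case (2 i)
    show ?thesis
    proof (cases xs rule: rev_cases)
      case Nil
      with u 2 have ji: "take j w = u' @ [i]" by simp
      then have "j \<noteq> 0" by (cases "j = 0") auto
      moreover have "u' = take (j - 1) w"
        using arg_cong[OF ji, of butlast] butlast_take[OF j] by simp
      ultimately show ?thesis using j \<open>u' \<in> W\<close> by (intro exI[of _ "j - 1"] exI[of _ "[]"]) auto
    next
      case (snoc ys y)
      then show ?thesis using j u a p 2
        by (intro exI[of _ j] exI[of _ ys]) (simp add: path_in_snoc)
    qed
  qed
qed

lemma all_components_finite_if_descent_bounded:
  assumes "W \<subseteq> gw_vertices \<kappa>" and "descent_bounded W"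
  shows "all_components_finite (gw_vertices \<kappa>) tree_adj W"
  unfolding all_components_finite_def
proof
  fix w assume "w \<in> gw_vertices \<kappa> \<inter> W"
  then have w: "w \<in> W" by auto
  from assms(2) obtain n where n: "\<And>v xs. length xs = n v \<Longrightarrow> \<not> path_in W v xs"
    unfolding descent_bounded_def by metis
  define B where "B = Max ((\<lambda>j. n (take j w)) ` {..length w})"
  have "{u. (w, u) \<in> (induced_edges (gw_vertices \<kappa>) tree_adj W)\<^sup>*}
      \<subseteq> {u \<in> gw_vertices \<kappa>. length u \<le> length w + B}"
  proof
    fix u assume "u \<in> {u. (w, u) \<in> (induced_edges (gw_vertices \<kappa>) tree_adj W)\<^sup>*}"
    then obtain j xs where j: "j \<le> length w" and u: "u = take j w @ xs"
      and a: "take j w \<in> W" and p: "path_in W (take j w) xs"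
      using rtrancl_induced_tree_adj_cases[OF w] by blast
    have "u \<in> W" using u a p path_in_last by (cases "xs = []") auto
    have "length xs < n (take j w)"
    proof (rule ccontr)
      assume "\<not> length xs < n (take j w)"
      then have "length (take (n (take j w)) xs) = n (take j w)" by simp
      with n path_in_take[OF p] show False by blast
    qed
    moreover have "n (take j w) \<le> B" unfolding B_def using j by (intro Max_ge) auto
    ultimately show "u \<in> {u \<in> gw_vertices \<kappa>. length u \<le> length w + B}"
      using u \<open>u \<in> W\<close> assms(1) j by auto
  qed
  then show "finite {u. (w, u) \<in> (induced_edges (gw_vertices \<kappa>) tree_adj W)\<^sup>*}"
    using finite_gw_vertices_length_le by (rule finite_subset)
qed

section \<open>Path weights\<close>

fun suminf_lists :: "nat \<Rightarrow> (nat list \<Rightarrow> ennreal) \<Rightarrow> ennreal" where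
  "suminf_lists 0 g = g []"
| "suminf_lists (Suc n) g = (\<Sum>i. suminf_lists n (\<lambda>ys. g (i # ys)))"

lemma suminf_lists_cmult: "suminf_lists n (\<lambda>xs. c * g xs) = c * suminf_lists n g"
  by (induction n arbitrary: g) auto

lemma suminf_lists_mono:
  "(\<And>xs. length xs = n \<Longrightarrow> g xs \<le> h xs) \<Longrightarrow> suminf_lists n g \<le> suminf_lists n h"
proof (induction n arbitrary: g h)
  case (Suc n)
  show ?case unfolding suminf_lists.simps
    by (intro suminf_le summableI Suc.IH) (use Suc.prems in auto)
qed simp

lemma countable_lists_length: "countable {xs :: nat list. length xs = n}"
  by (rule countable_subset[of _ UNIV]) auto

lemma emeasure_UN_lists_le:
  assumes "\<And>xs. B xs \<in> sets M"
  shows "emeasure M (\<Union>xs\<in>{xs. length xs = n}. B xs) \<le> suminf_lists n (\<lambda>xs. emeasure M (B xs))"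
  using assms
proof (induction n arbitrary: B)
  case 0
  have "{xs :: nat list. length xs = 0} = {[]}" by auto
  then show ?case by simp
next
  case (Suc n)
  have "(\<Union>xs\<in>{xs. length xs = Suc n}. B xs) = (\<Union>i. \<Union>ys\<in>{ys. length ys = n}. B (i # ys))"
    by (auto simp: length_Suc_conv)
  moreover have "(\<Union>ys\<in>{ys. length ys = n}. B (i # ys)) \<in> sets M" for i
    by (intro sets.countable_UN' countable_lists_length) (use Suc.prems in auto)
  ultimately have "emeasure M (\<Union>xs\<in>{xs. length xs = Suc n}. B xs)
      \<le> (\<Sum>i. emeasure M (\<Union>ys\<in>{ys. length ys = n}. B (i # ys)))"
    by (auto intro: emeasure_subadditive_countably)
  also have "\<dots> \<le> (\<Sum>i. suminf_lists n (\<lambda>ys. emeasure M (B (i # ys))))"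
    by (intro suminf_le summableI Suc.IH Suc.prems)
  finally show ?case by simp
qed

text \<open>path_weight q n u \<kappa> is the sum, over the descending paths of length n from u in the
  tree of \<kappa>, of the product of the weights q (\<kappa> w) of the vertices w below u on the path.\<close>
fun path_weight :: "(nat \<Rightarrow> ennreal) \<Rightarrow> nat \<Rightarrow> nat list \<Rightarrow> (nat list \<Rightarrow> nat) \<Rightarrow> ennreal" where
  "path_weight q 0 u \<kappa> = 1"
| "path_weight q (Suc n) u \<kappa> =
     (\<Sum>i. (if i < \<kappa> u then 1 else 0) * (q (\<kappa> (u @ [i])) * path_weight q n (u @ [i]) \<kappa>))"

lemma suminf_lists_path_prod_le_path_weight:
  fixes q :: "nat \<Rightarrow> ennreal" and \<kappa> :: "nat list \<Rightarrow> nat"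
  defines "h \<equiv> \<lambda>u. if u \<in> gw_vertices \<kappa> then q (\<kappa> u) else 0"
  shows "suminf_lists n (\<lambda>xs. \<Prod>k<n. h (v @ take (Suc k) xs)) \<le> path_weight q n v \<kappa>"
proof (induction n arbitrary: v)
  case (Suc n)
  have "(\<Prod>k<Suc n. h (v @ take (Suc k) (i # ys)))
      = h (v @ [i]) * (\<Prod>k<n. h ((v @ [i]) @ take (Suc k) ys))" for i ys
    by (subst prod.lessThan_Suc_shift) simp
  then have "suminf_lists (Suc n) (\<lambda>xs. \<Prod>k<Suc n. h (v @ take (Suc k) xs))
       = (\<Sum>i. h (v @ [i]) * suminf_lists n (\<lambda>ys. \<Prod>k<n. h ((v @ [i]) @ take (Suc k) ys)))"
    by (simp only: suminf_lists.simps suminf_lists_cmult)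
  also have "\<dots> \<le> path_weight q (Suc n) v \<kappa>"
    unfolding path_weight.simps
  proof (intro suminf_le summableI)
    fix i
    show "h (v @ [i]) * suminf_lists n (\<lambda>ys. \<Prod>k<n. h ((v @ [i]) @ take (Suc k) ys))
        \<le> (if i < \<kappa> v then 1 else 0) * (q (\<kappa> (v @ [i])) * path_weight q n (v @ [i]) \<kappa>)"
      using gw_vertices_snocD(2)[of v i \<kappa>] Suc.IH[of "v @ [i]"]
      by (auto simp: h_def mult_left_mono)
  qed
  finally show ?case .
qed simp

section \<open>Independent activity on a fixed tree\<close>

lemma inj_on_path_vertices: "inj_on (\<lambda>k. v @ take (Suc k) xs) {..<length xs}"
  by (rule inj_onI) (auto dest: arg_cong[where f = length])

lemma suminf_const_less_top_ennreal:
  fixes c :: ennreal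
  assumes "(\<Sum>n::nat. c) < \<top>"
  shows "c = 0"
proof (rule ccontr)
  assume "c \<noteq> 0"
  have le: "of_nat N * c \<le> (\<Sum>n::nat. c)" for N
    using sum_le_suminf[of "\<lambda>_. c" "{..<N}"] by simp
  obtain s where s: "(\<Sum>n::nat. c) = ennreal s" "0 \<le> s"
    using assms by (cases "\<Sum>n::nat. c") auto
  have "c \<noteq> \<top>" using le[of 1] s by (auto simp: top_unique)
  then obtain r where r: "c = ennreal r" "0 \<le> r" by (cases c) auto
  with \<open>c \<noteq> 0\<close> have "0 < r" by (auto simp: less_le)
  obtain N :: nat where "s / r < N" using reals_Archimedean2 by blast
  moreover have "ennreal (N * r) \<le> ennreal s"
    using le[of N] s r by (simp add: ennreal_of_nat_eq_real_of_nat ennreal_mult)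
  then have "N * r \<le> s" using s(2) by (simp add: ennreal_le_iff)
  ultimately show False using \<open>0 < r\<close> by (simp add: field_simps)
qed

context prob_space
begin

lemma path_event_in_events:
  assumes "A ` V \<subseteq> events"
  shows "{\<omega> \<in> space M. path_in {u \<in> V. \<omega> \<in> A u} v xs} \<in> events"
proof -
  have "{\<omega> \<in> A u. u \<in> V} \<in> events" for u
    using assms by (cases "u \<in> V") auto
  then have "space M \<inter> (\<Inter>k\<in>{..<length xs}. {\<omega> \<in> A (v @ take (Suc k) xs). v @ take (Suc k) xs \<in> V})
      \<in> events" by auto
  also have "space M \<inter> (\<Inter>k\<in>{..<length xs}. {\<omega> \<in> A (v @ take (Suc k) xs). v @ take (Suc k) xs \<in> V})
      = {\<omega> \<in> space M. path_in {u \<in> V. \<omega> \<in> A u} v xs}"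
    by (auto simp: path_in_def)
  finally show ?thesis .
qed

lemma emeasure_path_event_le:
  assumes indep: "indep_events A V" and prob: "\<And>u. u \<in> V \<Longrightarrow> ennreal (prob (A u)) \<le> h u"
  shows "emeasure M {\<omega> \<in> space M. path_in {u \<in> V. \<omega> \<in> A u} v xs} \<le> (\<Prod>k<length xs. h (v @ take (Suc k) xs))"
proof (cases "xs \<noteq> [] \<and> (\<forall>k<length xs. v @ take (Suc k) xs \<in> V)")
  case True
  define S where "S = (\<lambda>k. v @ take (Suc k) xs) ` {..<length xs}"
  have S: "S \<subseteq> V" "S \<noteq> {}" "finite S" using True by (auto simp: S_def)
  have "{\<omega> \<in> space M. path_in {u \<in> V. \<omega> \<in> A u} v xs} = (\<Inter>u\<in>S. A u)"
  proof -
    have "A u \<in> events" if "u \<in> S" for u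
      using indep S(1) that by (auto simp: indep_events_def)
    then have "A u \<subseteq> space M" if "u \<in> S" for u
      using that by (simp add: sets.sets_into_space)
    then show ?thesis using True S(2) by (auto simp: S_def path_in_def)
  qed
  then have "emeasure M {\<omega> \<in> space M. path_in {u \<in> V. \<omega> \<in> A u} v xs} = ennreal (\<Prod>u\<in>S. prob (A u))"
    using indep S by (simp add: emeasure_eq_measure indep_events_def)
  also have "\<dots> = (\<Prod>k<length xs. ennreal (prob (A (v @ take (Suc k) xs))))"
    unfolding S_def by (simp add: prod.reindex[OF inj_on_path_vertices] prod_ennreal)
  also have "\<dots> \<le> (\<Prod>k<length xs. h (v @ take (Suc k) xs))"
    using True prob by (intro prod_mono_ennreal) auto
  finally show ?thesis .
next
  case False
  then have "{\<omega> \<in> space M. path_in {u \<in> V. \<omega> \<in> A u} v xs} = (if xs = [] then space M else {})"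
    by (auto simp: path_in_def)
  then show ?thesis using False by (auto simp: emeasure_space_1)
qed

text \<open>The probability that some descending path of length n from v consists of vertices
  whose events all occur is at most path_weight q n v \<kappa>; summability forces these
  probabilities to vanish.\<close>
lemma AE_descent_bounded:
  assumes indep: "indep_events A (gw_vertices \<kappa>)"
    and prob: "\<And>u. u \<in> gw_vertices \<kappa> \<Longrightarrow> ennreal (prob (A u)) \<le> q (\<kappa> u)"
    and fin: "\<And>v. (\<Sum>n. path_weight q n v \<kappa>) < \<infinity>"
  shows "AE \<omega> in M. descent_bounded {u \<in> gw_vertices \<kappa>. \<omega> \<in> A u}"
proof -
  define h where "h u = (if u \<in> gw_vertices \<kappa> then q (\<kappa> u) else 0)" for u
  define E where "E v n = (\<Union>xs\<in>{xs. length xs = n}.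
      {\<omega> \<in> space M. path_in {u \<in> gw_vertices \<kappa>. \<omega> \<in> A u} v xs})" for v n
  have events: "A ` gw_vertices \<kappa> \<subseteq> events" using indep by (simp add: indep_events_def)
  have E: "E v n \<in> events" for v n
    unfolding E_def using path_event_in_events[OF events]
    by (intro sets.countable_UN' countable_lists_length) auto
  have E_le: "emeasure M (E v n) \<le> path_weight q n v \<kappa>" for v n
  proof -
    have "emeasure M (E v n)
        \<le> suminf_lists n (\<lambda>xs. emeasure M {\<omega> \<in> space M. path_in {u \<in> gw_vertices \<kappa>. \<omega> \<in> A u} v xs})"
      unfolding E_def by (rule emeasure_UN_lists_le) (rule path_event_in_events[OF events])
    also have "\<dots> \<le> suminf_lists n (\<lambda>xs. \<Prod>k<n. h (v @ take (Suc k) xs))"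
      using emeasure_path_event_le[OF indep, of h] prob by (intro suminf_lists_mono) (auto simp: h_def)
    also have "\<dots> \<le> path_weight q n v \<kappa>"
      unfolding h_def by (rule suminf_lists_path_prod_le_path_weight)
    finally show ?thesis .
  qed
  have null: "(\<Inter>n. E v n) \<in> null_sets M" for v
  proof -
    have "emeasure M (\<Inter>n. E v n) \<le> path_weight q n v \<kappa>" for n
      by (rule order_trans[OF emeasure_mono E_le]) (use E in auto)
    then have "(\<Sum>n::nat. emeasure M (\<Inter>n. E v n)) \<le> (\<Sum>n. path_weight q n v \<kappa>)"
      by (intro suminf_le summableI)
    also have "\<dots> < \<top>" using fin[of v] by simp
    finally have "emeasure M (\<Inter>n. E v n) = 0" by (rule suminf_const_less_top_ennreal)
    moreover have "(\<Inter>n. E v n) \<in> events" using E by auto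
    ultimately show ?thesis by (simp add: null_sets_def)
  qed
  have "AE \<omega> in M. \<omega> \<notin> (\<Inter>n. E v n)" for v
    by (rule AE_I'[OF null]) auto
  then have "AE \<omega> in M. \<forall>v. \<omega> \<notin> (\<Inter>n. E v n)"
    by (simp add: AE_all_countable)
  then show ?thesis
  proof (rule AE_mp, intro AE_I2 impI)
    fix \<omega> assume "\<forall>v. \<omega> \<notin> (\<Inter>n. E v n)" and "\<omega> \<in> space M"
    then show "descent_bounded {u \<in> gw_vertices \<kappa>. \<omega> \<in> A u}"
      by (auto simp: descent_bounded_def E_def)
  qed
qed

end

lemma poisson_random_measure_prob_pos:
  assumes "poisson_random_measure M \<mu> N" and "B \<in> sets \<mu>" and "emeasure \<mu> B < \<infinity>"
  shows "measure M {\<omega> \<in> space M. 0 < N \<omega> B} = 1 - exp (- enn2real (emeasure \<mu> B))"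
proof -
  interpret prob_space M using assms(1) by (simp add: poisson_random_measure_def)
  have "measure M {\<omega> \<in> space M. N \<omega> B = of_nat 0}
      = enn2real (emeasure \<mu> B) ^ 0 / fact 0 * exp (- enn2real (emeasure \<mu> B))"
    using assms unfolding poisson_random_measure_def by blast
  moreover have "{\<omega> \<in> space M. N \<omega> B = 0} \<in> events"
    using assms by (auto simp: poisson_random_measure_def)
  moreover have "{\<omega> \<in> space M. 0 < N \<omega> B} = space M - {\<omega> \<in> space M. N \<omega> B = 0}"
    by (auto simp: zero_less_iff_neq_zero)
  ultimately show ?thesis using prob_compl by simp
qed

lemma iid_PRMs_indep_events:
  assumes "iid_PRMs M \<mu> V N" and "\<And>u. u \<in> V \<Longrightarrow> B u \<in> sets \<mu>"
  shows "prob_space.indep_events M (\<lambda>u. {\<omega> \<in> space M. 0 < N u \<omega> (B u)}) V"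
proof -
  interpret prob_space M using assms(1) by (simp add: iid_PRMs_def)
  have "indep_vars (\<lambda>_. Pi\<^sub>M (sets \<mu>) (\<lambda>_. borel)) (\<lambda>u \<omega>. restrict (N u \<omega>) (sets \<mu>)) V"
    using assms(1) by (simp add: iid_PRMs_def)
  then have "indep_events (\<lambda>u. {\<omega> \<in> space M. 0 < restrict (N u \<omega>) (sets \<mu>) (B u)}) V"
    by (rule indep_eventsI_indep_vars[where P = "\<lambda>u f. 0 < f (B u)"]) (use assms(2) in measurable)
  moreover have "{\<omega> \<in> space M. 0 < restrict (N u \<omega>) (sets \<mu>) (B u)} = {\<omega> \<in> space M. 0 < N u \<omega> (B u)}"
    if "u \<in> V" for u
    using assms(2)[OF that] by simp
  ultimately show ?thesis
    unfolding indep_events_def_alt by (simp cong: indep_sets_cong)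
qed

section \<open>Averaging over the unimodular Galton--Watson tree\<close>

definition subtree :: "'a list \<Rightarrow> 'a list set" where
  "subtree u = range ((@) u)"

lemma subtree_snoc_subset: "subtree (u @ [i]) \<subseteq> subtree u"
  by (auto simp: subtree_def)

lemma snoc_in_subtree: "u @ [i] \<in> subtree u"
  by (simp add: subtree_def)

lemma self_in_subtree: "u \<in> subtree u"
  by (auto simp: subtree_def intro: image_eqI[of _ _ "[]"])

lemma not_in_subtree_snoc: "u \<notin> subtree (u @ [i])"
  by (auto simp: subtree_def)

lemma path_weight_cong_subtree:
  "(\<And>w. w \<in> subtree u \<Longrightarrow> \<kappa> w = \<kappa>' w) \<Longrightarrow> path_weight q n u \<kappa> = path_weight q n u \<kappa>'"
proof (induction n arbitrary: u)
  case (Suc n)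
  have child: "path_weight q n (u @ [i]) \<kappa> = path_weight q n (u @ [i]) \<kappa>'" for i
  proof (rule Suc.IH)
    fix w assume "w \<in> subtree (u @ [i])"
    then show "\<kappa> w = \<kappa>' w" by (rule Suc.prems[OF subsetD[OF subtree_snoc_subset]])
  qed
  have "\<kappa> u = \<kappa>' u" "\<kappa> (u @ [i]) = \<kappa>' (u @ [i])" for i
    by (intro Suc.prems self_in_subtree snoc_in_subtree)+
  then show ?case by (simp add: child)
qed simp

lemma borel_measurable_path_weight:
  assumes "subtree u \<subseteq> S"
  shows "path_weight q n u \<in> borel_measurable (Pi\<^sub>M S (\<lambda>_. count_space UNIV))"
  using assms
proof (induction n arbitrary: u)
  case 0
  have "path_weight q 0 u = (\<lambda>_. 1)" by (simp add: fun_eq_iff)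
  then show ?case by simp
next
  case (Suc n)
  have coord: "(\<lambda>\<kappa>. f (\<kappa> w)) \<in> borel_measurable (Pi\<^sub>M S (\<lambda>_. count_space UNIV))"
    if "w \<in> S" for w and f :: "nat \<Rightarrow> ennreal"
    using measurable_compose[OF measurable_component_singleton[OF that,
        of "\<lambda>_. count_space (UNIV :: nat set)"], of f borel] by simp
  have u: "u \<in> S" using Suc.prems self_in_subtree by (rule subsetD)
  show ?case
    unfolding path_weight.simps
  proof (rule borel_measurable_suminf_order)
    fix i
    have "u @ [i] \<in> S" using Suc.prems snoc_in_subtree by (rule subsetD)
    moreover have "path_weight q n (u @ [i]) \<in> borel_measurable (Pi\<^sub>M S (\<lambda>_. count_space UNIV))"
      by (rule Suc.IH[OF order_trans[OF subtree_snoc_subset Suc.prems]])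
    ultimately show "(\<lambda>\<kappa>. (if i < \<kappa> u then 1 else 0) * (q (\<kappa> (u @ [i])) * path_weight q n (u @ [i]) \<kappa>))
        \<in> borel_measurable (Pi\<^sub>M S (\<lambda>_. count_space UNIV))"
      using coord[OF u, of "\<lambda>k. if i < k then 1 else 0"] coord[of "u @ [i]" q]
      by (intro borel_measurable_times_ennreal) auto
  qed
qed

lemma (in prob_space) indep_var_nn_integral_mult:
  fixes X Y :: "'a \<Rightarrow> ennreal"
  assumes "indep_var borel X borel Y"
  shows "(\<integral>\<^sup>+\<omega>. X \<omega> * Y \<omega> \<partial>M) = (\<integral>\<^sup>+\<omega>. X \<omega> \<partial>M) * (\<integral>\<^sup>+\<omega>. Y \<omega> \<partial>M)"
proof -
  have "case_bool (borel :: ennreal measure) borel = (\<lambda>_. borel)"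
    by (auto simp: fun_eq_iff split: bool.split)
  then have "indep_vars (\<lambda>_. borel) (case_bool X Y) UNIV"
    using assms unfolding indep_var_def by simp
  from indep_vars_nn_integral[OF _ this] show ?thesis
    by (simp add: UNIV_bool mult.commute)
qed

lemma suminf_indicator_lessThan_ennreal: "(\<Sum>i. (if i < n then 1 else 0 :: ennreal)) = of_nat n"
  by (subst suminf_finite[of "{..<n}"]) auto

lemma nn_integral_count_space_valued:
  assumes "X \<in> measurable M (count_space UNIV)"
  shows "(\<integral>\<^sup>+\<omega>. f (X \<omega>) \<partial>M) = (\<Sum>k. f k * emeasure M {\<omega> \<in> space M. X \<omega> = k})"
proof -
  have sets: "{\<omega> \<in> space M. X \<omega> = k} \<in> sets M" for k
    using assms by measurable
  have "(\<integral>\<^sup>+\<omega>. f (X \<omega>) \<partial>M) = (\<integral>\<^sup>+\<omega>. (\<Sum>k. f k * indicator {\<omega> \<in> space M. X \<omega> = k} \<omega>) \<partial>M)"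
  proof (rule nn_integral_cong)
    fix \<omega> assume "\<omega> \<in> space M"
    then show "f (X \<omega>) = (\<Sum>k. f k * indicator {\<omega> \<in> space M. X \<omega> = k} \<omega>)"
      by (subst suminf_finite[of "{X \<omega>}"]) (auto simp: indicator_def)
  qed
  also have "\<dots> = (\<Sum>k. f k * emeasure M {\<omega> \<in> space M. X \<omega> = k})"
    using sets by (simp add: nn_integral_suminf nn_integral_cmult_indicator)
  finally show ?thesis .
qed

lemma summable_first_moment:
  assumes "summable (\<lambda>n. (real n)\<^sup>2 * pmf \<rho> n)"
  shows "summable (\<lambda>n. real n * pmf \<rho> n)"
proof (rule summable_comparison_test'[OF assms])
  fix n :: nat
  have "real n \<le> (real n)\<^sup>2" by (cases n) (auto simp: power2_eq_square)
  then show "norm (real n * pmf \<rho> n) \<le> (real n)\<^sup>2 * pmf \<rho> n"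
    by (auto intro!: mult_right_mono pmf_nonneg)
qed

lemma pmf_mean_nonneg: "summable (\<lambda>n. real n * pmf \<rho> n) \<Longrightarrow> 0 \<le> pmf_mean \<rho>"
  unfolding pmf_mean_def by (rule suminf_nonneg) (auto simp: pmf_nonneg)

lemma hat_rho_nonneg: "summable (\<lambda>n. real n * pmf \<rho> n) \<Longrightarrow> 0 \<le> hat_rho \<rho> k"
  using pmf_mean_nonneg[of \<rho>] by (auto simp: hat_rho_def pmf_nonneg)

text \<open>This is where the finite second moment of \<rho> enters.\<close>
lemma summable_hat_rho_mean:
  assumes "summable (\<lambda>n. (real n)\<^sup>2 * pmf \<rho> n)"
  shows "summable (\<lambda>k. real k * hat_rho \<rho> k)"
proof (cases "pmf_mean \<rho> = 0")
  case True
  then have "(\<lambda>k. real k * hat_rho \<rho> k) = (\<lambda>_. 0)" by (auto simp: hat_rho_def fun_eq_iff)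
  then show ?thesis by simp
next
  case False
  have mean: "0 < pmf_mean \<rho>"
    using False pmf_mean_nonneg[OF summable_first_moment[OF assms]] by simp
  have "summable (\<lambda>k. (real (Suc k))\<^sup>2 * pmf \<rho> (Suc k) / pmf_mean \<rho>)"
    using summable_ignore_initial_segment[OF assms, of 1] by (simp add: summable_divide)
  then show ?thesis
  proof (rule summable_comparison_test')
    fix k :: nat
    have "real k * (real (k + 1) * pmf \<rho> (k + 1)) \<le> (real (Suc k))\<^sup>2 * pmf \<rho> (Suc k)"
      by (auto simp: power2_eq_square intro!: mult_right_mono pmf_nonneg)
    then show "norm (real k * hat_rho \<rho> k) \<le> (real (Suc k))\<^sup>2 * pmf \<rho> (Suc k) / pmf_mean \<rho>"
      using mean False hat_rho_nonneg[OF summable_first_moment[OF assms], of k]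
      by (simp add: hat_rho_def divide_right_mono)
  qed
qed

context
  fixes P :: "'p measure" and \<rho> :: "nat pmf" and K :: "nat list \<Rightarrow> 'p \<Rightarrow> nat"
  assumes UGW: "UGW_offspring P \<rho> K"
begin

interpretation prob_space P
  using UGW by (simp add: UGW_offspring_def)

lemma measurable_offspring [measurable]: "K v \<in> measurable P (count_space UNIV)"
  using UGW by (simp add: UGW_offspring_def)

lemma borel_measurable_path_weight_offspring [measurable]:
  "(\<lambda>\<omega>. path_weight q n u (\<lambda>w. K w \<omega>)) \<in> borel_measurable P"
proof -
  have "(\<lambda>\<omega>. \<lambda>w\<in>UNIV. K w \<omega>) \<in> measurable P (Pi\<^sub>M UNIV (\<lambda>_. count_space UNIV))"
    by (rule measurable_restrict) simp
  from measurable_compose[OF this borel_measurable_path_weight[of u UNIV q n]] show ?thesis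
    by (simp add: restrict_def)
qed

lemma nn_integral_offspring:
  "(\<integral>\<^sup>+\<omega>. f (K v \<omega>) \<partial>P) = (\<Sum>k. f k * ennreal (if v = [] then pmf \<rho> k else hat_rho \<rho> k))"
  using UGW by (cases "v = []") (simp_all add: nn_integral_count_space_valued emeasure_eq_measure UGW_offspring_def)

lemma nn_integral_offspring_less_top:
  assumes "summable (\<lambda>n. (real n)\<^sup>2 * pmf \<rho> n)"
  shows "(\<integral>\<^sup>+\<omega>. of_nat (K v \<omega>) \<partial>P) < \<infinity>"
proof -
  define p where "p k = (if v = [] then pmf \<rho> k else hat_rho \<rho> k)" for k
  have p: "0 \<le> p k" for k
    using hat_rho_nonneg[OF summable_first_moment[OF assms]] by (simp add: p_def)
  have "summable (\<lambda>k. real k * p k)"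
    using summable_first_moment[OF assms] summable_hat_rho_mean[OF assms]
    by (cases "v = []") (simp_all add: p_def)
  then have "(\<Sum>k. ennreal (real k * p k)) \<noteq> \<top>"
    using p by (intro ennreal_suminf_neq_top) auto
  moreover have "(\<integral>\<^sup>+\<omega>. of_nat (K v \<omega>) \<partial>P) = (\<Sum>k. ennreal (real k * p k))"
    using nn_integral_offspring[of "\<lambda>k. of_nat k" v] p
    by (simp add: p_def ennreal_mult ennreal_of_nat_eq_real_of_nat)
  ultimately show ?thesis by (simp add: less_top)
qed

text \<open>The offspring number of u is independent of the offspring numbers in the subtree of
  any child of u, on which the path weights from that child depend.\<close>
lemma nn_integral_offspring_child_mult:
  "(\<integral>\<^sup>+\<omega>. f (K u \<omega>) * (q (K (u @ [i]) \<omega>) * path_weight q n (u @ [i]) (\<lambda>w. K w \<omega>)) \<partial>P)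
    = (\<integral>\<^sup>+\<omega>. f (K u \<omega>) \<partial>P) * (\<integral>\<^sup>+\<omega>. q (K (u @ [i]) \<omega>) * path_weight q n (u @ [i]) (\<lambda>w. K w \<omega>) \<partial>P)"
proof -
  define B where "B = subtree (u @ [i])"
  have uiB: "u @ [i] \<in> B" by (simp add: B_def self_in_subtree)
  have "indep_vars (\<lambda>_. count_space UNIV) K UNIV"
    using UGW by (simp add: UGW_offspring_def)
  then have "indep_var (Pi\<^sub>M {u} (\<lambda>_. count_space UNIV)) (\<lambda>\<omega>. restrict (\<lambda>w. K w \<omega>) {u})
      (Pi\<^sub>M B (\<lambda>_. count_space UNIV)) (\<lambda>\<omega>. restrict (\<lambda>w. K w \<omega>) B)"
    by (rule indep_var_restrict) (auto simp: B_def not_in_subtree_snoc)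
  moreover have "(\<lambda>\<kappa>. f (\<kappa> u)) \<in> borel_measurable (Pi\<^sub>M {u} (\<lambda>_. count_space (UNIV :: nat set)))"
    using measurable_compose[OF measurable_component_singleton[of u "{u}"
        "\<lambda>_. count_space (UNIV :: nat set)"], of f borel] by simp
  moreover have "(\<lambda>\<kappa>. q (\<kappa> (u @ [i])) * path_weight q n (u @ [i]) \<kappa>)
      \<in> borel_measurable (Pi\<^sub>M B (\<lambda>_. count_space (UNIV :: nat set)))"
    using measurable_compose[OF measurable_component_singleton[OF uiB,
        of "\<lambda>_. count_space (UNIV :: nat set)"], of q borel]
    by (intro borel_measurable_times_ennreal borel_measurable_path_weight) (auto simp: B_def)
  ultimately have "indep_var borel (\<lambda>\<omega>. f (restrict (\<lambda>w. K w \<omega>) {u} u))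
      borel (\<lambda>\<omega>. q (restrict (\<lambda>w. K w \<omega>) B (u @ [i])) * path_weight q n (u @ [i]) (restrict (\<lambda>w. K w \<omega>) B))"
    by (rule indep_var_compose[unfolded comp_def])
  moreover have "path_weight q n (u @ [i]) (restrict (\<lambda>w. K w \<omega>) B) = path_weight q n (u @ [i]) (\<lambda>w. K w \<omega>)"
    for \<omega> by (rule path_weight_cong_subtree) (simp add: B_def)
  ultimately show ?thesis
    using uiB by (simp add: indep_var_nn_integral_mult)
qed

lemma nn_integral_path_weight_Suc_le:
  assumes "\<And>i. (\<integral>\<^sup>+\<omega>. q (K (v @ [i]) \<omega>) * path_weight q n (v @ [i]) (\<lambda>w. K w \<omega>) \<partial>P) \<le> c"
  shows "(\<integral>\<^sup>+\<omega>. g (K v \<omega>) * path_weight q (Suc n) v (\<lambda>w. K w \<omega>) \<partial>P)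
    \<le> (\<integral>\<^sup>+\<omega>. g (K v \<omega>) * of_nat (K v \<omega>) \<partial>P) * c"
proof -
  define X where "X i \<omega> = q (K (v @ [i]) \<omega>) * path_weight q n (v @ [i]) (\<lambda>w. K w \<omega>)" for i \<omega>
  define G where "G i \<omega> = g (K v \<omega>) * (if i < K v \<omega> then 1 else 0)" for i \<omega>
  have [measurable]: "X i \<in> borel_measurable P" "G i \<in> borel_measurable P" for i
    unfolding X_def G_def by measurable
  have "(\<integral>\<^sup>+\<omega>. g (K v \<omega>) * path_weight q (Suc n) v (\<lambda>w. K w \<omega>) \<partial>P) = (\<integral>\<^sup>+\<omega>. (\<Sum>i. G i \<omega> * X i \<omega>) \<partial>P)"
    by (simp add: G_def X_def mult.assoc)
  also have "\<dots> = (\<Sum>i. \<integral>\<^sup>+\<omega>. G i \<omega> * X i \<omega> \<partial>P)"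
    by (rule nn_integral_suminf) measurable
  also have "\<dots> = (\<Sum>i. (\<integral>\<^sup>+\<omega>. G i \<omega> \<partial>P) * (\<integral>\<^sup>+\<omega>. X i \<omega> \<partial>P))"
    using nn_integral_offspring_child_mult[of "\<lambda>k. g k * (if _ < k then 1 else 0)"]
    by (simp add: G_def X_def)
  also have "\<dots> \<le> (\<Sum>i. (\<integral>\<^sup>+\<omega>. G i \<omega> \<partial>P) * c)"
    using assms by (intro suminf_le summableI mult_left_mono) (auto simp: X_def)
  also have "\<dots> = (\<integral>\<^sup>+\<omega>. (\<Sum>i. G i \<omega>) \<partial>P) * c"
    by (simp add: nn_integral_suminf)
  also have "\<dots> = (\<integral>\<^sup>+\<omega>. g (K v \<omega>) * of_nat (K v \<omega>) \<partial>P) * c"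
    by (simp add: G_def suminf_indicator_lessThan_ennreal)
  finally show ?thesis .
qed

lemma nn_integral_weighted_path_weight_le:
  assumes "v \<noteq> []" and "\<And>k. q k \<le> 1"
  shows "(\<integral>\<^sup>+\<omega>. q (K v \<omega>) * path_weight q n v (\<lambda>w. K w \<omega>) \<partial>P)
    \<le> (\<Sum>k. q k * of_nat k * ennreal (hat_rho \<rho> k)) ^ n"
  using assms(1)
proof (induction n arbitrary: v)
  case 0
  have "(\<integral>\<^sup>+\<omega>. q (K v \<omega>) * path_weight q 0 v (\<lambda>w. K w \<omega>) \<partial>P) \<le> (\<integral>\<^sup>+\<omega>. 1 \<partial>P)"
    using assms(2) by (intro nn_integral_mono) simp
  then show ?case by (simp add: emeasure_space_1)
next
  case (Suc n)
  have "(\<integral>\<^sup>+\<omega>. q (K v \<omega>) * path_weight q (Suc n) v (\<lambda>w. K w \<omega>) \<partial>P)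
      \<le> (\<integral>\<^sup>+\<omega>. q (K v \<omega>) * of_nat (K v \<omega>) \<partial>P) * (\<Sum>k. q k * of_nat k * ennreal (hat_rho \<rho> k)) ^ n"
    by (rule nn_integral_path_weight_Suc_le) (simp add: Suc.IH)
  also have "(\<integral>\<^sup>+\<omega>. q (K v \<omega>) * of_nat (K v \<omega>) \<partial>P) = (\<Sum>k. q k * of_nat k * ennreal (hat_rho \<rho> k))"
    using nn_integral_offspring[of "\<lambda>k. q k * of_nat k" v] Suc.prems by simp
  finally show ?case by (simp add: mult.commute)
qed

lemma AE_path_weight_summable:
  assumes "summable (\<lambda>n. (real n)\<^sup>2 * pmf \<rho> n)"
    and "\<And>k. q k \<le> 1" and "(\<Sum>k. q k * of_nat k * ennreal (hat_rho \<rho> k)) < 1"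
  shows "AE \<omega> in P. \<forall>v. (\<Sum>n. path_weight q n v (\<lambda>w. K w \<omega>)) < \<infinity>"
proof -
  define m where "m = (\<Sum>k. q k * of_nat k * ennreal (hat_rho \<rho> k))"
  obtain r where r: "m = ennreal r" "0 \<le> r" "r < 1"
    using assms(3) unfolding m_def[symmetric] by (cases m) (auto simp: ennreal_less_iff)
  have geometric: "(\<Sum>n. m ^ n) < \<infinity>"
    using r by (simp add: ennreal_power ennreal_suminf_neq_top less_top)
  have "(\<integral>\<^sup>+\<omega>. q (K (v @ [i]) \<omega>) * path_weight q n (v @ [i]) (\<lambda>w. K w \<omega>) \<partial>P) \<le> m ^ n"
    for v i n
    unfolding m_def by (rule nn_integral_weighted_path_weight_le) (simp_all add: assms(2))
  from nn_integral_path_weight_Suc_le[where g = "\<lambda>_. 1", OF this]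
  have Suc_le: "(\<integral>\<^sup>+\<omega>. path_weight q (Suc n) v (\<lambda>w. K w \<omega>) \<partial>P)
      \<le> (\<integral>\<^sup>+\<omega>. of_nat (K v \<omega>) \<partial>P) * m ^ n" for v n
    by simp
  have "(\<integral>\<^sup>+\<omega>. (\<Sum>n. path_weight q n v (\<lambda>w. K w \<omega>)) \<partial>P) < \<infinity>" for v
  proof -
    have "(\<integral>\<^sup>+\<omega>. (\<Sum>n. path_weight q n v (\<lambda>w. K w \<omega>)) \<partial>P)
        = (\<Sum>n. \<integral>\<^sup>+\<omega>. path_weight q n v (\<lambda>w. K w \<omega>) \<partial>P)"
      by (rule nn_integral_suminf) measurable
    also have "\<dots> = (\<Sum>n. \<integral>\<^sup>+\<omega>. path_weight q (Suc n) v (\<lambda>w. K w \<omega>) \<partial>P) + 1"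
      by (subst suminf_offset[of _ 1]) (simp_all add: emeasure_space_1)
    also have "\<dots> \<le> (\<Sum>n. (\<integral>\<^sup>+\<omega>. of_nat (K v \<omega>) \<partial>P) * m ^ n) + 1"
      by (intro add_mono suminf_le summableI Suc_le order_refl)
    also have "\<dots> < \<infinity>"
      using nn_integral_offspring_less_top[OF assms(1)] geometric
      by (simp add: ennreal_mult_less_top less_top)
    finally show ?thesis .
  qed
  then have "AE \<omega> in P. (\<Sum>n. path_weight q n v (\<lambda>w. K w \<omega>)) \<noteq> \<infinity>" for v
    by (intro nn_integral_PInf_AE) (measurable, simp add: less_top)
  then show ?thesis by (simp add: AE_all_countable less_top)
qed

end

section \<open>Choice of the rates and finite dissociability\<close>

lemma suminf_one_minus_exp_less_1_obtain:
  fixes a c :: "nat \<Rightarrow> real"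
  assumes a: "summable a" "\<And>k. 0 \<le> a k" and c: "\<And>k. 0 \<le> c k"
  obtains \<Delta> where "0 < \<Delta>" and "summable (\<lambda>k. (1 - exp (- (\<Delta> * c k))) * a k)"
    and "(\<Sum>k. (1 - exp (- (\<Delta> * c k))) * a k) < 1"
proof -
  txt \<open>Split off a tail of mass below 1/2; on the remaining finitely many terms
    1 - exp (- \<Delta> c k) \<le> \<Delta> c k is small.\<close>
  obtain N where "norm (\<Sum>k. a (k + N)) < 1/2"
    using suminf_exist_split[OF _ a(1), of "1/2"] by auto
  then have N: "(\<Sum>k. a (k + N)) < 1/2" by (simp add: abs_less_iff)
  define L where "L = (\<Sum>i<N. c i)"
  have L: "c i \<le> L" if "i < N" for i
    using c that by (auto simp: L_def intro: member_le_sum)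
  define A where "A = suminf a"
  have "0 \<le> A" unfolding A_def using a by (rule suminf_nonneg)
  define \<Delta> where "\<Delta> = 1 / (4 * (L * A + 1))"
  have "0 \<le> L" using c by (simp add: L_def sum_nonneg)
  with \<open>0 \<le> A\<close> have "0 \<le> L * A" by simp
  then have \<Delta>: "0 < \<Delta>" "\<Delta> * L * A \<le> 1/4"
    by (auto simp: \<Delta>_def divide_simps mult.assoc)
  define b where "b k = (1 - exp (- (\<Delta> * c k))) * a k" for k
  have b: "0 \<le> b k" "b k \<le> a k" "b k \<le> \<Delta> * c k * a k" for k
    using \<Delta>(1) c[of k] a(2)[of k] exp_ge_add_one_self[of "- (\<Delta> * c k)"]
    by (auto simp: b_def intro: mult_left_le_one_le mult_right_mono)
  have "summable b"
    by (rule summable_comparison_test'[OF a(1)]) (use b in auto)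
  have "suminf b = (\<Sum>k. b (k + N)) + (\<Sum>i<N. b i)"
    by (rule suminf_split_initial_segment[OF \<open>summable b\<close>])
  also have "(\<Sum>k. b (k + N)) \<le> (\<Sum>k. a (k + N))"
    using \<open>summable b\<close> a(1) b(2) by (intro suminf_le summable_ignore_initial_segment) auto
  also have "(\<Sum>i<N. b i) \<le> (\<Sum>i<N. \<Delta> * L * a i)"
    using b(3) L \<Delta>(1) a(2) by (intro sum_mono order_trans[OF b(3)] mult_right_mono mult_left_mono) auto
  also have "\<dots> \<le> \<Delta> * L * A"
    unfolding A_def sum_distrib_left[symmetric]
    using \<Delta>(1) \<open>0 \<le> L\<close> a by (intro mult_left_mono sum_le_suminf) auto
  finally have "suminf b < 1" using N \<Delta>(2) by simp
  then show ?thesis using that \<Delta>(1) \<open>summable b\<close> unfolding b_def by blast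
qed

lemma intensity_box:
  assumes "finite_measure \<sigma>" and "J \<in> sets \<sigma>" and "0 \<le> a" and "0 \<le> b"
  shows "({0<..a} \<times> {0<..b}) \<times> J \<in> sets (intensity \<sigma>)"
    and "emeasure (intensity \<sigma>) (({0<..a} \<times> {0<..b}) \<times> J) = ennreal (a * b) * emeasure \<sigma> J"
proof -
  let ?L = "lborel \<Otimes>\<^sub>M lborel :: (real \<times> real) measure"
  let ?Q = "{0::real..} \<times> {0::real..}"
  have Q: "?Q \<inter> space ?L \<in> sets ?L" by (simp add: pair_measureI)
  have rect: "{0<..a} \<times> {0<..b} \<in> sets (restrict_space ?L ?Q)"
    by (subst sets_restrict_space_iff[OF Q]) (auto simp: pair_measureI)
  then show "({0<..a} \<times> {0<..b}) \<times> J \<in> sets (intensity \<sigma>)"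
    unfolding intensity_def using assms(2) by (intro pair_measureI)
  interpret finite_measure \<sigma> by (rule assms(1))
  have "emeasure (intensity \<sigma>) (({0<..a} \<times> {0<..b}) \<times> J)
      = emeasure (restrict_space ?L ?Q) ({0<..a} \<times> {0<..b}) * emeasure \<sigma> J"
    unfolding intensity_def by (rule emeasure_pair_measure_Times[OF rect assms(2)])
  also have "emeasure (restrict_space ?L ?Q) ({0<..a} \<times> {0<..b}) = emeasure ?L ({0<..a} \<times> {0<..b})"
    by (rule emeasure_restrict_space[OF Q]) auto
  also have "\<dots> = ennreal (a * b)"
    using assms(3,4) by (simp add: lborel.emeasure_pair_measure_Times ennreal_mult)
  finally show "emeasure (intensity \<sigma>) (({0<..a} \<times> {0<..b}) \<times> J) = ennreal (a * b) * emeasure \<sigma> J" .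
qed

text \<open>A vertex with k children has at most k + 2 vertices in its closed neighbourhood, so its
  activation count is Poisson with mean at most \<Delta> C(k+2,T) s, where s = \<sigma>(J);
  activity_bound is the probability that such a count is positive.\<close>
definition activity_bound :: "(nat \<Rightarrow> real \<Rightarrow> real) \<Rightarrow> real \<Rightarrow> real \<Rightarrow> real \<Rightarrow> nat \<Rightarrow> ennreal" where
  "activity_bound C s \<Delta> T k = ennreal (1 - exp (- (\<Delta> * C (k + 2) T * s)))"

lemma activity_bound_le_1: "activity_bound C s \<Delta> T k \<le> 1"
  by (simp add: activity_bound_def)

lemma admissible_params_C_pos: "admissible_params J \<sigma> C \<Longrightarrow> 1 \<le> k \<Longrightarrow> 0 \<le> T \<Longrightarrow> 0 < C k T"
  by (simp add: admissible_params_def)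

lemma admissible_params_C_mono:
  assumes "admissible_params J \<sigma> C" "1 \<le> k" "k \<le> k'" "0 \<le> T" "T \<le> T'"
  shows "C k T \<le> C k' T'"
proof -
  have "C k T \<le> C k' T" "C k' T \<le> C k' T'"
    using assms by (simp_all add: admissible_params_def)
  then show ?thesis by (rule order_trans)
qed

lemma prob_active_le:
  fixes \<kappa> :: "nat list \<Rightarrow> nat" and N :: "nat list \<Rightarrow> 'w \<Rightarrow> ((real \<times> real) \<times> 'j) set \<Rightarrow> ennreal"
  assumes adm: "admissible_params J \<sigma> C" and iid: "iid_PRMs M (intensity \<sigma>) (gw_vertices \<kappa>) N"
    and "0 < \<Delta>" "0 < T" and u: "u \<in> gw_vertices \<kappa>"
  defines "R \<equiv> ({0<..\<Delta>} \<times> {0<..C (card (cl (gw_vertices \<kappa>) tree_adj u)) T}) \<times> J"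
  shows "R \<in> sets (intensity \<sigma>)"
    and "measure M {\<omega> \<in> space M. 0 < N u \<omega> R} \<le> 1 - exp (- (\<Delta> * C (\<kappa> u + 2) T * measure \<sigma> J))"
proof -
  let ?c = "C (card (cl (gw_vertices \<kappa>) tree_adj u)) T"
  have J: "J \<in> sets \<sigma>" "finite_measure \<sigma>"
    using adm by (auto simp: admissible_params_def)
  have "0 < ?c"
    using admissible_params_C_pos[OF adm card_cl_gw_vertices_pos[OF u]] \<open>0 < T\<close> by simp
  then have R: "R \<in> sets (intensity \<sigma>)"
    "emeasure (intensity \<sigma>) R = ennreal (\<Delta> * ?c * measure \<sigma> J)"
    using intensity_box[OF J(2,1), of \<Delta> ?c] \<open>0 < \<Delta>\<close>
    by (auto simp: R_def finite_measure.emeasure_eq_measure[OF J(2)] ennreal_mult)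
  then show "R \<in> sets (intensity \<sigma>)" by simp
  from R have "measure M {\<omega> \<in> space M. 0 < N u \<omega> R} = 1 - exp (- (\<Delta> * ?c * measure \<sigma> J))"
    using iid u poisson_random_measure_prob_pos[of M "intensity \<sigma>" "N u" R]
      \<open>0 < \<Delta>\<close> \<open>0 < ?c\<close> measure_nonneg[of \<sigma> J]
    by (simp add: iid_PRMs_def)
  also have "\<dots> \<le> 1 - exp (- (\<Delta> * C (\<kappa> u + 2) T * measure \<sigma> J))"
    using admissible_params_C_mono[OF adm card_cl_gw_vertices_pos[OF u] card_cl_gw_vertices_le[OF u], of T T]
      \<open>0 < \<Delta>\<close> \<open>0 < T\<close> by (simp add: mult_right_mono)
  finally show "measure M {\<omega> \<in> space M. 0 < N u \<omega> R} \<le> 1 - exp (- (\<Delta> * C (\<kappa> u + 2) T * measure \<sigma> J))" .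
qed

lemma AE_active_components_finite:
  fixes \<kappa> :: "nat list \<Rightarrow> nat" and N :: "nat list \<Rightarrow> 'w \<Rightarrow> ((real \<times> real) \<times> 'j) set \<Rightarrow> ennreal"
  assumes adm: "admissible_params J \<sigma> C" and iid: "iid_PRMs M (intensity \<sigma>) (gw_vertices \<kappa>) N"
    and "0 < \<Delta>" "0 < T"
    and q: "\<And>k. activity_bound C (measure \<sigma> J) \<Delta> T k \<le> q k"
    and fin: "\<And>v. (\<Sum>n. path_weight q n v \<kappa>) < \<infinity>"
  shows "AE \<omega> in M. all_components_finite (gw_vertices \<kappa>) tree_adj
    (active_set (gw_vertices \<kappa>) tree_adj J C T \<Delta> (\<lambda>v. N v \<omega>))"
proof -
  interpret prob_space M using iid by (simp add: iid_PRMs_def)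
  let ?V = "gw_vertices \<kappa>"
  define A where "A u = {\<omega> \<in> space M. 0 < N u \<omega> (({0<..\<Delta>} \<times> {0<..C (card (cl ?V tree_adj u)) T}) \<times> J)}"
    for u
  have "indep_events A ?V"
    unfolding A_def using iid prob_active_le(1)[OF adm iid \<open>0 < \<Delta>\<close> \<open>0 < T\<close>]
    by (rule iid_PRMs_indep_events)
  moreover have "ennreal (prob (A u)) \<le> q (\<kappa> u)" if "u \<in> ?V" for u
  proof -
    have "ennreal (prob (A u)) \<le> activity_bound C (measure \<sigma> J) \<Delta> T (\<kappa> u)"
      using prob_active_le(2)[OF adm iid \<open>0 < \<Delta>\<close> \<open>0 < T\<close> that]
      by (simp add: A_def activity_bound_def ennreal_leI)
    then show ?thesis using q order_trans by blast
  qed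
  ultimately have "AE \<omega> in M. descent_bounded {u \<in> ?V. \<omega> \<in> A u}"
    using fin by (rule AE_descent_bounded)
  then show ?thesis
  proof (rule AE_mp, intro AE_I2 impI)
    fix \<omega> assume "\<omega> \<in> space M" and "descent_bounded {u \<in> ?V. \<omega> \<in> A u}"
    moreover have "active_set ?V tree_adj J C T \<Delta> (\<lambda>v. N v \<omega>) = {u \<in> ?V. \<omega> \<in> A u}"
      using \<open>\<omega> \<in> space M\<close> by (auto simp: active_set_def A_def)
    ultimately show "all_components_finite ?V tree_adj (active_set ?V tree_adj J C T \<Delta> (\<lambda>v. N v \<omega>))"
      by (simp add: all_components_finite_if_descent_bounded)
  qed
qed

lemma finitely_dissociable_gw_vertices:
  assumes adm: "admissible_params J \<sigma> C" and D: "\<And>n. 0 < D n"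
    and fin: "\<And>n v. (\<Sum>j. path_weight (activity_bound C (measure \<sigma> J) (D n) (Suc n)) j v \<kappa>) < \<infinity>"
  shows "finitely_dissociable TYPE('w) J \<sigma> C (gw_vertices \<kappa>) tree_adj"
  unfolding finitely_dissociable_def
proof (intro conjI allI impI locally_finite_gw_vertices)
  fix T :: real assume "0 < T"
  define n where "n = nat \<lceil>T\<rceil>"
  define \<Delta> where "\<Delta> = min T (D n)"
  have "0 < \<Delta>" "\<Delta> \<le> D n" using \<open>0 < T\<close> D[of n] by (auto simp: \<Delta>_def)
  have "T \<le> real (Suc n)" unfolding n_def by linarith
  have bound: "activity_bound C (measure \<sigma> J) \<Delta> T k \<le> activity_bound C (measure \<sigma> J) (D n) (Suc n) k"
    for k
  proof -
    have "0 < C (k + 2) T" "C (k + 2) T \<le> C (k + 2) (Suc n)"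
      using admissible_params_C_pos[OF adm, of "k + 2" T]
        admissible_params_C_mono[OF adm, of "k + 2" "k + 2" T "Suc n"] \<open>0 < T\<close> \<open>T \<le> real (Suc n)\<close>
      by simp_all
    then have "\<Delta> * C (k + 2) T * measure \<sigma> J \<le> D n * C (k + 2) (Suc n) * measure \<sigma> J"
      using \<open>0 < \<Delta>\<close> \<open>\<Delta> \<le> D n\<close> by (intro mult_right_mono mult_mono) auto
    then show ?thesis by (simp add: activity_bound_def ennreal_leI)
  qed
  show "\<exists>\<Delta>>0. \<Delta> \<le> T \<and> (\<forall>(M :: 'w measure) N. iid_PRMs M (intensity \<sigma>) (gw_vertices \<kappa>) N \<longrightarrow>
      (AE \<omega> in M. all_components_finite (gw_vertices \<kappa>) tree_adj
        (active_set (gw_vertices \<kappa>) tree_adj J C T \<Delta> (\<lambda>v. N v \<omega>))))"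
  proof (intro exI[of _ \<Delta>] conjI allI impI)
    show "0 < \<Delta>" "\<Delta> \<le> T" using \<open>0 < \<Delta>\<close> by (simp_all add: \<Delta>_def)
    fix M :: "'w measure" and N assume "iid_PRMs M (intensity \<sigma>) (gw_vertices \<kappa>) N"
    then show "AE \<omega> in M. all_components_finite (gw_vertices \<kappa>) tree_adj
        (active_set (gw_vertices \<kappa>) tree_adj J C T \<Delta> (\<lambda>v. N v \<omega>))"
      by (rule AE_active_components_finite[OF adm _ \<open>0 < \<Delta>\<close> \<open>0 < T\<close> bound fin])
  qed
qed

lemma ex_activity_bound_mean_less_1:
  assumes "summable (\<lambda>n. (real n)\<^sup>2 * pmf \<rho> n)" and "admissible_params J \<sigma> C" and "0 \<le> T"
  shows "\<exists>\<Delta>>0. (\<Sum>k. activity_bound C (measure \<sigma> J) \<Delta> T k * of_nat k * ennreal (hat_rho \<rho> k)) < 1"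
proof -
  define a where "a k = real k * hat_rho \<rho> k" for k
  define c where "c k = C (k + 2) T * measure \<sigma> J" for k
  have a: "summable a" "0 \<le> a k" for k
    unfolding a_def using summable_hat_rho_mean[OF assms(1)] hat_rho_nonneg[OF summable_first_moment[OF assms(1)]]
    by auto
  have c: "0 \<le> c k" for k
    using admissible_params_C_pos[OF assms(2), of "k + 2" T] assms(3) by (simp add: c_def)
  obtain \<Delta> where \<Delta>: "0 < \<Delta>" "summable (\<lambda>k. (1 - exp (- (\<Delta> * c k))) * a k)"
    "(\<Sum>k. (1 - exp (- (\<Delta> * c k))) * a k) < 1"
    using a c by (rule suminf_one_minus_exp_less_1_obtain)
  have e: "0 \<le> 1 - exp (- (\<Delta> * c k))" for k
    using \<Delta>(1) c[of k] by simp
  have "activity_bound C (measure \<sigma> J) \<Delta> T k * of_nat k * ennreal (hat_rho \<rho> k)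
      = ennreal ((1 - exp (- (\<Delta> * c k))) * a k)" for k
  proof -
    have "of_nat k * ennreal (hat_rho \<rho> k) = ennreal (a k)"
      using hat_rho_nonneg[OF summable_first_moment[OF assms(1)], of k]
      by (simp add: a_def ennreal_of_nat_eq_real_of_nat ennreal_mult)
    moreover have "activity_bound C (measure \<sigma> J) \<Delta> T k = ennreal (1 - exp (- (\<Delta> * c k)))"
      by (simp add: activity_bound_def c_def mult.assoc)
    ultimately show ?thesis
      by (simp add: mult.assoc ennreal_mult[OF e a(2)])
  qed
  moreover have "0 \<le> (1 - exp (- (\<Delta> * c k))) * a k" for k
    using e a(2) by simp
  ultimately have "(\<Sum>k. activity_bound C (measure \<sigma> J) \<Delta> T k * of_nat k * ennreal (hat_rho \<rho> k))
      = ennreal (\<Sum>k. (1 - exp (- (\<Delta> * c k))) * a k)"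
    using \<Delta>(2) by (simp add: suminf_ennreal2)
  also have "\<dots> < 1" using \<Delta>(3) by simp
  finally show ?thesis using \<Delta>(1) by blast
qed

theorem mainTheorem10:
  fixes \<rho> :: "nat pmf"
    and P :: "'p measure"
    and K :: "nat list \<Rightarrow> 'p \<Rightarrow> nat"
    and J :: "'j set"
    and \<sigma> :: "'j measure"
    and C :: "nat \<Rightarrow> real \<Rightarrow> real"
  assumes "summable (\<lambda>n. (real n)\<^sup>2 * pmf \<rho> n)"
    and "UGW_offspring P \<rho> K"
    and "admissible_params J \<sigma> C"
  shows "AE \<omega> in P. finitely_dissociable TYPE('w) J \<sigma> C (gw_vertices (\<lambda>v. K v \<omega>)) tree_adj"
proof -
  let ?q = "\<lambda>\<Delta> n. activity_bound C (measure \<sigma> J) \<Delta> (Suc n)"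
  have "\<exists>\<Delta>>0. (\<Sum>k. ?q \<Delta> n k * of_nat k * ennreal (hat_rho \<rho> k)) < 1" for n
    using assms(1,3) by (rule ex_activity_bound_mean_less_1) simp
  then obtain D where D: "\<And>n. 0 < D n" "\<And>n. (\<Sum>k. ?q (D n) n k * of_nat k * ennreal (hat_rho \<rho> k)) < 1"
    by metis
  have "AE \<omega> in P. \<forall>n v. (\<Sum>j. path_weight (?q (D n) n) j v (\<lambda>w. K w \<omega>)) < \<infinity>"
    using AE_path_weight_summable[OF assms(2,1) activity_bound_le_1 D(2)] by (simp add: AE_all_countable)
  then show ?thesis
    by eventually_elim (rule finitely_dissociable_gw_vertices[OF assms(3) D(1)], blast)
qed

end
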